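(* For a ring $R$, the following are equivalent: (1) $R$ is uniquely weakly $J$-clean; (2) $R/J(R)$ is semi Boolean and idempotents can be lifted uniquely weakly modulo $J(R)$.
   Context: All rings are associative with identity; $J(R)$ is the Jacobson radical and $Idem(R)$ the set of idempotents. $R$ is uniquely weakly $J$-clean if for every $x\in R$ there exists a unique $e\in Idem(R)$ with $x-e\in J(R)$ or $x+e\in J(R)$. A ring $A$ is semi Boolean if for every $x\in A$, $x^2=x$ or $x^2=-x$. Idempotents can be lifted uniquely weakly modulo an ideal $I$ if for every $x\in R$ with $x^2-x\in I$ there exists a unique $e\in Idem(R)$ with $x-e\in I$ or $x+e\in I$. *)

theory Defs
  imports "HOL-Algebra.Algebra"
begin

definition left_ideal :: "('a, 'b) ring_scheme \<Rightarrow> 'a set \<Rightarrow> bool" where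
  "left_ideal R I \<longleftrightarrow> additive_subgroup I R \<and>
     (\<forall>r\<in>carrier R. \<forall>x\<in>I. r \<otimes>\<^bsub>R\<^esub> x \<in> I)"

definition maximal_left_ideal :: "('a, 'b) ring_scheme \<Rightarrow> 'a set \<Rightarrow> bool" where
  "maximal_left_ideal R I \<longleftrightarrow> left_ideal R I \<and> I \<noteq> carrier R \<and>
     (\<forall>K. left_ideal R K \<and> I \<subseteq> K \<and> K \<noteq> carrier R \<longrightarrow> K = I)"

text \<open>Jacobson radical: intersection of all maximal left ideals (the whole ring if there are none).\<close>
definition jacobson :: "('a, 'b) ring_scheme \<Rightarrow> 'a set" where
  "jacobson R = carrier R \<inter> \<Inter> {I. maximal_left_ideal R I}"

definition Idem_set :: "('a, 'b) ring_scheme \<Rightarrow> 'a set" where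
  "Idem_set R = {e \<in> carrier R. e \<otimes>\<^bsub>R\<^esub> e = e}"

definition uniquely_weakly_J_clean :: "('a, 'b) ring_scheme \<Rightarrow> bool" where
  "uniquely_weakly_J_clean R \<longleftrightarrow> (\<forall>x\<in>carrier R. \<exists>!e. e \<in> Idem_set R \<and>
     (x \<ominus>\<^bsub>R\<^esub> e \<in> jacobson R \<or> x \<oplus>\<^bsub>R\<^esub> e \<in> jacobson R))"

definition semi_boolean :: "('a, 'b) ring_scheme \<Rightarrow> bool" where
  "semi_boolean A \<longleftrightarrow> (\<forall>x\<in>carrier A. x \<otimes>\<^bsub>A\<^esub> x = x \<or> x \<otimes>\<^bsub>A\<^esub> x = \<ominus>\<^bsub>A\<^esub> x)"

definition idem_lift_uniquely_weakly :: "('a, 'b) ring_scheme \<Rightarrow> 'a set \<Rightarrow> bool" where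
  "idem_lift_uniquely_weakly R I \<longleftrightarrow> (\<forall>x\<in>carrier R. x \<otimes>\<^bsub>R\<^esub> x \<ominus>\<^bsub>R\<^esub> x \<in> I \<longrightarrow>
     (\<exists>!e. e \<in> Idem_set R \<and> (x \<ominus>\<^bsub>R\<^esub> e \<in> I \<or> x \<oplus>\<^bsub>R\<^esub> e \<in> I)))"

end

theory Submission
  imports Defs
begin

text \<open>
  Nothing about the radical is needed beyond its being a two-sided ideal: for any ideal \<open>I\<close>,
  if \<open>x \<equiv> \<plusminus>e (mod I)\<close> with \<open>e\<close> idempotent then \<open>x\<^sup>2 \<equiv> e \<equiv> \<plusminus>x\<close>, so \<open>R/I\<close> is semi Boolean;
  conversely in a semi Boolean quotient either \<open>x\<close> or \<open>-x\<close> is idempotent modulo \<open>I\<close>, and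
  the condition \<open>x \<mp> e \<in> I\<close> is invariant under \<open>x \<mapsto> -x\<close>, so unique weak lifting of
  idempotents applies to one of them. The radical of the definition (intersection of maximal
  left ideals) is closed under right multiplication because, for a maximal left ideal \<open>M\<close>,
  the colon \<open>{y. y r \<in> M}\<close> is either the whole ring or again a maximal left ideal.
\<close>

lemma (in abelian_group) additive_subgroup_closedI:
  assumes "H \<subseteq> carrier G" "\<zero> \<in> H" "\<And>a. a \<in> H \<Longrightarrow> \<ominus> a \<in> H"
    "\<And>a b. a \<in> H \<Longrightarrow> b \<in> H \<Longrightarrow> a \<oplus> b \<in> H"
  shows "additive_subgroup H G"
  by (rule additive_subgroupI, rule add.subgroupI) (use assms in \<open>auto simp: a_inv_def[symmetric]\<close>)

lemma left_idealD:
  assumes "left_ideal R M"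
  shows "additive_subgroup M R" "\<And>r x. r \<in> carrier R \<Longrightarrow> x \<in> M \<Longrightarrow> r \<otimes>\<^bsub>R\<^esub> x \<in> M"
  using assms unfolding left_ideal_def by auto

lemma maximal_left_idealD: "maximal_left_ideal R M \<Longrightarrow> left_ideal R M"
  unfolding maximal_left_ideal_def by blast

lemma (in ring) left_ideal_colon:
  assumes M: "left_ideal R M" and r: "r \<in> carrier R"
  shows "left_ideal R {y \<in> carrier R. y \<otimes> r \<in> M}"
proof -
  interpret M: additive_subgroup M R using left_idealD(1)[OF M] .
  show ?thesis
    unfolding left_ideal_def
    using r left_idealD(2)[OF M]
    by (auto intro!: additive_subgroup_closedI simp: l_minus l_distr m_assoc)
qed

lemma (in ring) left_ideal_add_principal:
  assumes M: "left_ideal R M" and a: "a \<in> carrier R"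
  shows "left_ideal R {m \<oplus> s \<otimes> a | m s. m \<in> M \<and> s \<in> carrier R}"
    (is "left_ideal R ?L")
proof -
  interpret M: additive_subgroup M R using left_idealD(1)[OF M] .
  note Mc = M.a_subset[THEN subsetD]
  have "additive_subgroup ?L R"
  proof (rule additive_subgroup_closedI)
    show "?L \<subseteq> carrier R" using a Mc by auto
    have "\<zero> = \<zero> \<oplus> \<zero> \<otimes> a" using a by simp
    then show "\<zero> \<in> ?L" using M.zero_closed by blast
    show "\<ominus> u \<in> ?L" if "u \<in> ?L" for u
    proof -
      obtain m s where u: "u = m \<oplus> s \<otimes> a" "m \<in> M" "s \<in> carrier R" using \<open>u \<in> ?L\<close> by blast
      have "\<ominus> u = \<ominus> m \<oplus> \<ominus> s \<otimes> a" using u a Mc by (simp add: minus_add l_minus)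
      then show ?thesis using u by blast
    qed
    show "u \<oplus> v \<in> ?L" if "u \<in> ?L" "v \<in> ?L" for u v
    proof -
      obtain m s m' s' where u: "u = m \<oplus> s \<otimes> a" "m \<in> M" "s \<in> carrier R"
        and v: "v = m' \<oplus> s' \<otimes> a" "m' \<in> M" "s' \<in> carrier R"
        using \<open>u \<in> ?L\<close> \<open>v \<in> ?L\<close> by blast
      have "u \<oplus> v = (m \<oplus> m') \<oplus> (s \<oplus> s') \<otimes> a" using u v a Mc by (simp add: l_distr a_ac)
      then show ?thesis using u v by blast
    qed
  qed
  moreover have "t \<otimes> u \<in> ?L" if t: "t \<in> carrier R" and "u \<in> ?L" for t u
  proof -
    obtain m s where u: "u = m \<oplus> s \<otimes> a" "m \<in> M" "s \<in> carrier R" using \<open>u \<in> ?L\<close> by blast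
    have "t \<otimes> u = t \<otimes> m \<oplus> (t \<otimes> s) \<otimes> a" using u a t Mc by (simp add: r_distr m_assoc)
    then show ?thesis using u t left_idealD(2)[OF M] by blast
  qed
  ultimately show ?thesis unfolding left_ideal_def by blast
qed

lemma (in ring) maximal_left_ideal_add_principal:
  assumes M: "maximal_left_ideal R M" and a: "a \<in> carrier R" "a \<notin> M"
  shows "{m \<oplus> s \<otimes> a | m s. m \<in> M \<and> s \<in> carrier R} = carrier R"
    (is "?L = _")
proof (rule ccontr)
  assume "?L \<noteq> carrier R"
  have Ml: "left_ideal R M" using M by (rule maximal_left_idealD)
  interpret M: additive_subgroup M R using left_idealD(1)[OF Ml] .
  have "M \<subseteq> ?L"
  proof
    fix m assume "m \<in> M"
    then have "m = m \<oplus> \<zero> \<otimes> a" using a M.a_subset by auto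
    with \<open>m \<in> M\<close> show "m \<in> ?L" by blast
  qed
  with \<open>?L \<noteq> carrier R\<close> have "?L = M"
    using M left_ideal_add_principal[OF Ml a(1)] unfolding maximal_left_ideal_def by blast
  moreover have "a \<in> ?L"
  proof -
    have "a = \<zero> \<oplus> \<one> \<otimes> a" using a by simp
    then show ?thesis using M.zero_closed by blast
  qed
  ultimately show False using a(2) by simp
qed

lemma (in ring) maximal_left_ideal_colon:
  assumes M: "maximal_left_ideal R M" and r: "r \<in> carrier R"
    and proper: "{y \<in> carrier R. y \<otimes> r \<in> M} \<noteq> carrier R"
  shows "maximal_left_ideal R {y \<in> carrier R. y \<otimes> r \<in> M}"
    (is "maximal_left_ideal R ?N")
  unfolding maximal_left_ideal_def
proof (intro conjI allI impI proper)
  have Ml: "left_ideal R M" using M by (rule maximal_left_idealD)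
  then show "left_ideal R ?N" using r by (rule left_ideal_colon)
  fix K assume "left_ideal R K \<and> ?N \<subseteq> K \<and> K \<noteq> carrier R"
  then have Kl: "left_ideal R K" and NK: "?N \<subseteq> K" and Kp: "K \<noteq> carrier R" by blast+
  interpret K: additive_subgroup K R using left_idealD(1)[OF Kl] .
  show "K = ?N"
  proof (rule ccontr)
    assume "K \<noteq> ?N"
    with NK obtain k where k: "k \<in> K" "k \<notin> ?N" by blast
    have kc: "k \<in> carrier R" using k K.a_subset by blast
    have "carrier R \<subseteq> K"
    proof
      fix z assume z: "z \<in> carrier R"
      have "k \<otimes> r \<notin> M" using k kc by blast
      then have "z \<otimes> r \<in> {m \<oplus> s \<otimes> (k \<otimes> r) | m s. m \<in> M \<and> s \<in> carrier R}"
        using maximal_left_ideal_add_principal[OF M] z r kc by simp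
      then obtain m s where ms: "z \<otimes> r = m \<oplus> s \<otimes> (k \<otimes> r)" "m \<in> M" "s \<in> carrier R"
        by blast
      have mc: "m \<in> carrier R" using ms(2) additive_subgroup.a_subset[OF left_idealD(1)[OF Ml]] by blast
      have "(z \<ominus> s \<otimes> k) \<otimes> r = z \<otimes> r \<ominus> s \<otimes> (k \<otimes> r)"
        using z ms(3) kc r by algebra
      also have "\<dots> = m" unfolding ms(1) using mc ms(3) kc r by algebra
      finally have "(z \<ominus> s \<otimes> k) \<otimes> r \<in> M" using ms(2) by simp
      then have "z \<ominus> s \<otimes> k \<in> ?N" using z ms(3) kc by simp
      then have "z \<ominus> s \<otimes> k \<in> K" using NK by blast
      moreover have "s \<otimes> k \<in> K" using left_idealD(2)[OF Kl ms(3) k(1)] .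
      ultimately have "(z \<ominus> s \<otimes> k) \<oplus> s \<otimes> k \<in> K" by (rule K.a_closed)
      moreover have "(z \<ominus> s \<otimes> k) \<oplus> s \<otimes> k = z" using z ms(3) kc by algebra
      ultimately show "z \<in> K" by simp
    qed
    then show False using Kp K.a_subset by blast
  qed
qed

lemma jacobson_iff:
  "x \<in> jacobson R \<longleftrightarrow> x \<in> carrier R \<and> (\<forall>M. maximal_left_ideal R M \<longrightarrow> x \<in> M)"
  unfolding jacobson_def by blast

lemma (in ring) jacobson_mult_right_mem:
  assumes M: "maximal_left_ideal R M" and x: "x \<in> jacobson R" and r: "r \<in> carrier R"
  shows "x \<otimes> r \<in> M"
proof -
  have "x \<in> {y \<in> carrier R. y \<otimes> r \<in> M}"
  proof (cases "{y \<in> carrier R. y \<otimes> r \<in> M} = carrier R")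
    case True
    then show ?thesis using x unfolding jacobson_iff by simp
  next
    case False
    then have "maximal_left_ideal R {y \<in> carrier R. y \<otimes> r \<in> M}"
      by (rule maximal_left_ideal_colon[OF M r])
    then show ?thesis using x unfolding jacobson_iff by blast
  qed
  then show ?thesis by simp
qed

lemma (in ring) jacobson_ideal: "ideal (jacobson R) R"
proof -
  have max_sg: "additive_subgroup M R" if "maximal_left_ideal R M" for M
    using that by (intro left_idealD(1) maximal_left_idealD)
  have sg: "additive_subgroup (jacobson R) R"
  proof (rule additive_subgroup_closedI)
    show "jacobson R \<subseteq> carrier R" unfolding jacobson_def by blast
    show "\<zero> \<in> jacobson R"
      by (simp add: jacobson_iff additive_subgroup.zero_closed[OF max_sg])
    show "\<ominus> a \<in> jacobson R" if "a \<in> jacobson R" for a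
      using that by (simp add: jacobson_iff additive_subgroup.a_inv_closed[OF max_sg])
    show "a \<oplus> b \<in> jacobson R" if "a \<in> jacobson R" "b \<in> jacobson R" for a b
      using that by (simp add: jacobson_iff additive_subgroup.a_closed[OF max_sg])
  qed
  have left: "x \<otimes> a \<in> jacobson R" if a: "a \<in> jacobson R" and x: "x \<in> carrier R" for a x
  proof -
    have "x \<otimes> a \<in> M" if M: "maximal_left_ideal R M" for M
    proof -
      have "a \<in> M" using a M unfolding jacobson_iff by blast
      with M x show ?thesis by (intro left_idealD(2) maximal_left_idealD)
    qed
    moreover have "a \<in> carrier R" using a unfolding jacobson_iff by blast
    ultimately show ?thesis using x unfolding jacobson_iff by blast
  qed
  have right: "a \<otimes> x \<in> jacobson R" if a: "a \<in> jacobson R" and x: "x \<in> carrier R" for a x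
  proof -
    have "a \<in> carrier R" using a unfolding jacobson_iff by blast
    then show ?thesis
      unfolding jacobson_iff[of "a \<otimes> x"] using jacobson_mult_right_mem[OF _ a x] x by simp
  qed
  show ?thesis
    by (rule idealI[OF ring_axioms additive_subgroup.a_subgroup[OF sg] left right])
qed

lemma (in ideal) rcos_eq_iff:
  assumes "a \<in> carrier R" "b \<in> carrier R"
  shows "I +> a = I +> b \<longleftrightarrow> a \<ominus> b \<in> I"
proof
  assume "I +> a = I +> b"
  then have "a \<in> I +> b" using a_rcos_self[OF assms(1)] by simp
  then show "a \<ominus> b \<in> I" using a_rcos_module_minus[OF ring_axioms assms(2,1)] by simp
next
  assume "a \<ominus> b \<in> I"
  then have "a \<in> I +> b" using a_rcos_module_minus[OF ring_axioms assms(2,1)] by simp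
  then show "I +> a = I +> b" using a_repr_independence'[OF _ assms(2)] by simp
qed

lemma (in ideal) semi_boolean_FactRing_iff:
  "semi_boolean (R Quot I) \<longleftrightarrow> (\<forall>x \<in> carrier R. x \<otimes> x \<ominus> x \<in> I \<or> x \<otimes> x \<oplus> x \<in> I)"
proof -
  interpret H: ring_hom_ring R "R Quot I" "(+>) I" by (rule rcos_ring_hom_ring)
  have "(I +> x) \<otimes>\<^bsub>R Quot I\<^esub> (I +> x) = I +> x \<or>
        (I +> x) \<otimes>\<^bsub>R Quot I\<^esub> (I +> x) = \<ominus>\<^bsub>R Quot I\<^esub> (I +> x)
        \<longleftrightarrow> x \<otimes> x \<ominus> x \<in> I \<or> x \<otimes> x \<ominus> \<ominus> x \<in> I" if x: "x \<in> carrier R" for x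
    by (simp only: H.hom_mult[OF x x, symmetric] H.hom_a_inv[OF x, symmetric]
        rcos_eq_iff[OF m_closed[OF x x] x] rcos_eq_iff[OF m_closed[OF x x] a_inv_closed[OF x]])
  moreover have "x \<otimes> x \<ominus> \<ominus> x = x \<otimes> x \<oplus> x" if "x \<in> carrier R" for x
    using that by (simp add: minus_eq)
  moreover have "carrier (R Quot I) = (+>) I ` carrier R"
    unfolding FactRing_def A_RCOSETS_def' by auto
  ultimately show ?thesis unfolding semi_boolean_def by simp
qed

lemma (in abelian_group) near_uminus_iff:
  assumes H: "additive_subgroup H G" and x: "x \<in> carrier G" and e: "e \<in> carrier G"
  shows "(\<ominus> x \<ominus> e \<in> H \<or> \<ominus> x \<oplus> e \<in> H) \<longleftrightarrow> (x \<ominus> e \<in> H \<or> x \<oplus> e \<in> H)"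
proof -
  interpret H: additive_subgroup H G by (rule H)
  have "\<ominus> y \<in> H \<longleftrightarrow> y \<in> H" if "y \<in> carrier G" for y
    using that H.a_inv_closed[of y] H.a_inv_closed[of "\<ominus> y"] by auto
  moreover have "\<ominus> x \<ominus> e = \<ominus> (x \<oplus> e)" "\<ominus> x \<oplus> e = \<ominus> (x \<ominus> e)"
    using x e by (simp_all add: minus_eq minus_add)
  ultimately show ?thesis using x e by auto
qed

lemma (in ideal) square_minus_self_mem:
  assumes x: "x \<in> carrier R" and e: "e \<in> Idem_set R" and xe: "x \<ominus> e \<in> I"
  shows "x \<otimes> x \<ominus> x \<in> I"
proof -
  have ec: "e \<in> carrier R" and idem: "e \<otimes> e = e" using e unfolding Idem_set_def by auto
  define j where "j = x \<ominus> e"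
  have jc: "j \<in> carrier R" using x ec unfolding j_def by simp
  have "x = j \<oplus> e" using x ec unfolding j_def by algebra
  then have "x \<otimes> x \<ominus> x = (j \<otimes> j \<oplus> j \<otimes> e \<oplus> e \<otimes> j \<ominus> j) \<oplus> (e \<otimes> e \<ominus> e)"
    using jc ec by algebra
  also have "\<dots> = j \<otimes> j \<oplus> j \<otimes> e \<oplus> e \<otimes> j \<ominus> j" using jc ec by (simp add: idem)
  also have "\<dots> \<in> I"
  proof -
    have jI: "j \<in> I" using xe unfolding j_def .
    then have "j \<otimes> j \<in> I" "j \<otimes> e \<in> I" "e \<otimes> j \<in> I"
      using jc ec by (auto intro: I_l_closed I_r_closed)
    with jI show ?thesis by (simp add: a_minus_def)
  qed
  finally show ?thesis .
qed

lemma (in ideal) square_plus_minus_self_mem: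
  assumes x: "x \<in> carrier R" and e: "e \<in> Idem_set R" and xe: "x \<ominus> e \<in> I \<or> x \<oplus> e \<in> I"
  shows "x \<otimes> x \<ominus> x \<in> I \<or> x \<otimes> x \<oplus> x \<in> I"
  using xe
proof
  assume "x \<ominus> e \<in> I"
  then show ?thesis using x e square_minus_self_mem by blast
next
  assume "x \<oplus> e \<in> I"
  have ec: "e \<in> carrier R" using e unfolding Idem_set_def by auto
  have "\<ominus> x \<ominus> e = \<ominus> (x \<oplus> e)" using x ec by (simp add: minus_eq minus_add)
  then have "\<ominus> x \<ominus> e \<in> I" using \<open>x \<oplus> e \<in> I\<close> by simp
  then have "\<ominus> x \<otimes> \<ominus> x \<ominus> \<ominus> x \<in> I"
    using x e by (intro square_minus_self_mem) auto
  then show ?thesis using x by (simp add: l_minus r_minus minus_eq)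
qed

lemma (in ideal) unique_weak_lifts_iff:
  "(\<forall>x \<in> carrier R. \<exists>!e. e \<in> Idem_set R \<and> (x \<ominus> e \<in> I \<or> x \<oplus> e \<in> I)) \<longleftrightarrow>
    semi_boolean (R Quot I) \<and> idem_lift_uniquely_weakly R I"
    (is "(\<forall>x \<in> carrier R. \<exists>!e. ?near x e) \<longleftrightarrow> _")
proof
  assume U: "\<forall>x \<in> carrier R. \<exists>!e. ?near x e"
  have "semi_boolean (R Quot I)"
    unfolding semi_boolean_FactRing_iff
  proof
    fix x assume x: "x \<in> carrier R"
    then obtain e where "?near x e" using U by blast
    then show "x \<otimes> x \<ominus> x \<in> I \<or> x \<otimes> x \<oplus> x \<in> I"
      using x square_plus_minus_self_mem by blast
  qed
  moreover have "idem_lift_uniquely_weakly R I"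
    unfolding idem_lift_uniquely_weakly_def using U by blast
  ultimately show "semi_boolean (R Quot I) \<and> idem_lift_uniquely_weakly R I" ..
next
  assume "semi_boolean (R Quot I) \<and> idem_lift_uniquely_weakly R I"
  then have sb: "\<And>x. x \<in> carrier R \<Longrightarrow> x \<otimes> x \<ominus> x \<in> I \<or> x \<otimes> x \<oplus> x \<in> I"
    and lift: "\<And>x. x \<in> carrier R \<Longrightarrow> x \<otimes> x \<ominus> x \<in> I \<Longrightarrow> \<exists>!e. ?near x e"
    unfolding semi_boolean_FactRing_iff idem_lift_uniquely_weakly_def by blast+
  show "\<forall>x \<in> carrier R. \<exists>!e. ?near x e"
  proof
    fix x assume x: "x \<in> carrier R"
    from sb[OF x] show "\<exists>!e. ?near x e"
    proof
      assume "x \<otimes> x \<ominus> x \<in> I"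
      then show ?thesis by (rule lift[OF x])
    next
      assume "x \<otimes> x \<oplus> x \<in> I"
      moreover have "\<ominus> x \<otimes> \<ominus> x \<ominus> \<ominus> x = x \<otimes> x \<oplus> x"
        using x by (simp add: l_minus r_minus minus_eq)
      ultimately have "\<exists>!e. ?near (\<ominus> x) e" using x by (intro lift) simp_all
      moreover have "?near (\<ominus> x) e \<longleftrightarrow> ?near x e" for e
        using near_uminus_iff[OF is_additive_subgroup x] unfolding Idem_set_def by blast
      ultimately show ?thesis by simp
    qed
  qed
qed

theorem mainTheorem8:
  fixes R :: "('a, 'b) ring_scheme"
  assumes "ring R"
  shows "uniquely_weakly_J_clean R \<longleftrightarrow>
    (semi_boolean (R Quot (jacobson R)) \<and> idem_lift_uniquely_weakly R (jacobson R))"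
proof -
  interpret J: ideal "jacobson R" R
    using ring.jacobson_ideal[OF assms] .
  show ?thesis
    unfolding uniquely_weakly_J_clean_def by (rule J.unique_weak_lifts_iff)
qed

end
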